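(* Let $\mathcal T\colon\mathbb{R}^s\to\mathbb{R}^s$ be a diffeomorphism with Lipschitz constants $\mathrm{Lip}(\mathcal T)\le K$ and $\mathrm{Lip}(\mathcal T^{-1})\le L$, and let $P_Z=\mathcal N(0,I)$ be the standard normal distribution on $\mathbb{R}^s$. Then for every $\mathrm{p}\in\mathbb{R}^s$, $$\frac{1}{L^sK^s}\,\mathcal N\big(\mathrm{p}\,\big|\,\mathcal T(0),\tfrac{1}{L^2}I\big)\le p_{\mathcal T_\#P_Z}(\mathrm{p})\le L^sK^s\,\mathcal N\big(\mathrm{p}\,\big|\,\mathcal T(0),K^2I\big).$$
   Context: $\mathcal T_\#P_Z=P_Z\circ\mathcal T^{-1}$ is the push-forward of $P_Z$ under $\mathcal T$, and $p_{\mathcal T_\#P_Z}$ its density, given by $p_{\mathcal T_\#P_Z}(\mathrm p)=p_Z(\mathcal T^{-1}(\mathrm p))\,|\det(\nabla\mathcal T^{-1}(\mathrm p))|$ where $p_Z$ is the standard normal density. $\mathcal N(\mathrm p\mid \mu,\Sigma)$ denotes the density at $\mathrm p$ of the normal distribution with mean $\mu$ and covariance $\Sigma$. *)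

theory Defs
  imports "HOL-Analysis.Analysis"
begin

definition C1_map :: "(real^'n \<Rightarrow> real^'n) \<Rightarrow> bool" where
  "C1_map f \<longleftrightarrow> (\<exists>f'. (\<forall>x. (f has_derivative f' x) (at x)) \<and>
                        continuous_on UNIV (\<lambda>x. matrix (f' x)))"

definition diffeomorphism :: "(real^'n \<Rightarrow> real^'n) \<Rightarrow> bool" where
  "diffeomorphism T \<longleftrightarrow> bij T \<and> C1_map T \<and> C1_map (inv T)"

definition normal_density :: "real^'n \<Rightarrow> real^'n^'n \<Rightarrow> real^'n \<Rightarrow> real" where
  "normal_density mu S x =
     (2 * pi) powr (- real CARD('n) / 2) * (det S) powr (- 1 / 2) *
     exp (- ((x - mu) \<bullet> (matrix_inv S *v (x - mu))) / 2)"

definition pushforward_std_normal_density :: "(real^'n \<Rightarrow> real^'n) \<Rightarrow> real^'n \<Rightarrow> real" where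
  "pushforward_std_normal_density T y =
     normal_density 0 (mat 1) (inv T y) * \<bar>det (jacobian (inv T) (at y))\<bar>"

end

theory Submission
  imports Defs
begin

text \<open>The derivative of an \<open>L\<close>-Lipschitz map has operator norm at most \<open>L\<close>, so
  \<open>|det D(T\<^sup>-\<^sup>1)| \<le> L\<^sup>s\<close>; since \<open>det DT \<cdot> det D(T\<^sup>-\<^sup>1) = 1\<close> and \<open>|det DT| \<le> K\<^sup>s\<close>, also
  \<open>|det D(T\<^sup>-\<^sup>1)| \<ge> K\<^sup>-\<^sup>s\<close>. The Gaussian factor is compared through
  \<open>\<parallel>T\<^sup>-\<^sup>1 p\<parallel> \<le> L \<parallel>p - T 0\<parallel>\<close> and \<open>\<parallel>p - T 0\<parallel> \<le> K \<parallel>T\<^sup>-\<^sup>1 p\<parallel>\<close>.\<close>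

lemma matrix_inv_eqI:
  fixes A B :: "'a::comm_semiring_1^'n^'n"
  assumes "A ** B = mat 1" and "B ** A = mat 1"
  shows "matrix_inv A = B"
proof -
  have "A ** matrix_inv A = mat 1 \<and> matrix_inv A ** A = mat 1"
    unfolding matrix_inv_def by (rule someI) (use assms in blast)
  then have "matrix_inv A = matrix_inv A ** (A ** B)"
    using assms by simp
  also have "\<dots> = B"
    using \<open>A ** matrix_inv A = mat 1 \<and> matrix_inv A ** A = mat 1\<close>
    by (simp add: matrix_mul_assoc)
  finally show ?thesis .
qed

lemma matrix_inv_scaleR_mat_1:
  fixes c :: real
  assumes "c \<noteq> 0"
  shows "matrix_inv (c *\<^sub>R mat 1 :: real^'n^'n) = inverse c *\<^sub>R mat 1"
  by (rule matrix_inv_eqI) (use assms in \<open>simp_all flip: scalar_matrix_assoc\<close>)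

lemma det_scaleR_mat_1: "det (c *\<^sub>R mat 1 :: real^'n^'n) = c ^ CARD('n)"
  by (subst det_diagonal) (auto simp: mat_def)

lemma normal_density_isotropic:
  fixes mu x :: "real^'n"
  assumes "\<sigma> > 0"
  shows "normal_density mu (\<sigma>\<^sup>2 *\<^sub>R mat 1) x =
    (2 * pi) powr (- real CARD('n) / 2) / \<sigma> ^ CARD('n) * exp (- (norm (x - mu) / \<sigma>)\<^sup>2 / 2)"
proof -
  have "(\<sigma>\<^sup>2) ^ CARD('n) = (\<sigma> ^ CARD('n)) powr 2"
    using assms by (simp add: powr_realpow flip: power_mult) (simp add: mult.commute)
  then have "((\<sigma>\<^sup>2) ^ CARD('n)) powr (- 1 / 2) = 1 / \<sigma> ^ CARD('n)"
    using assms by (simp add: powr_powr powr_minus_divide)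
  moreover have "(x - mu) \<bullet> (inverse (\<sigma>\<^sup>2) *\<^sub>R (x - mu)) = (norm (x - mu) / \<sigma>)\<^sup>2"
    by (simp only: inner_scaleR_right power_divide power2_norm_eq_inner) (simp add: field_simps)
  ultimately show ?thesis
    using assms unfolding normal_density_def det_scaleR_mat_1
    by (simp add: matrix_inv_scaleR_mat_1 flip: scaleR_matrix_vector_assoc)
qed

lemma pushforward_std_normal_density_eq:
  fixes T :: "real^'n \<Rightarrow> real^'n"
  shows "pushforward_std_normal_density T p =
    (2 * pi) powr (- real CARD('n) / 2) * exp (- (norm (inv T p))\<^sup>2 / 2)
      * \<bar>det (jacobian (inv T) (at p))\<bar>"
  using normal_density_isotropic[of 1 0 "inv T p"]
  by (simp add: pushforward_std_normal_density_def)

lemma norm_derivative_le_of_lipschitz: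
  fixes f :: "'a::real_normed_vector \<Rightarrow> 'b::real_normed_vector"
  assumes f': "(f has_derivative f') (at x)" and lip: "L-lipschitz_on UNIV f"
  shows "norm (f' h) \<le> L * norm h"
proof -
  have "linear f'" using f' has_derivative_linear by blast
  have "((\<lambda>t. x + t *\<^sub>R h) has_derivative (\<lambda>t. t *\<^sub>R h)) (at 0)"
    by (auto intro!: derivative_eq_intros)
  then have "((\<lambda>t. f (x + t *\<^sub>R h)) has_derivative (\<lambda>t. f' (t *\<^sub>R h))) (at 0)"
    using has_derivative_compose[of "\<lambda>t. x + t *\<^sub>R h" _ 0 UNIV f f'] f' by simp
  then have "((\<lambda>t. f (x + t *\<^sub>R h)) has_derivative (\<lambda>t. t *\<^sub>R f' h)) (at 0 within {0<..})"
    by (simp add: linear_scale[OF \<open>linear f'\<close>] has_derivative_at_withinI)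
  then have "((\<lambda>t. (f (x + t *\<^sub>R h) - f x - t *\<^sub>R f' h) /\<^sub>R \<bar>t\<bar>) \<longlongrightarrow> 0) (at_right 0)"
    by (simp add: has_derivative_at_within)
  then have "((\<lambda>t. (f (x + t *\<^sub>R h) - f x) /\<^sub>R t - f' h) \<longlongrightarrow> 0) (at_right 0)"
  proof (rule Lim_transform_eventually)
    show "\<forall>\<^sub>F t in at_right 0. (f (x + t *\<^sub>R h) - f x - t *\<^sub>R f' h) /\<^sub>R \<bar>t\<bar>
        = (f (x + t *\<^sub>R h) - f x) /\<^sub>R t - f' h"
      by (rule eventually_mono[OF eventually_at_right_less]) (simp add: scaleR_diff_right)
  qed
  then have "((\<lambda>t. (f (x + t *\<^sub>R h) - f x) /\<^sub>R t) \<longlongrightarrow> f' h) (at_right 0)"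
    by (simp add: Lim_null[symmetric])
  moreover have "\<forall>\<^sub>F t in at_right 0. norm ((f (x + t *\<^sub>R h) - f x) /\<^sub>R t) \<le> L * norm h"
  proof (rule eventually_at_rightI[of 0 1])
    fix t :: real assume "t \<in> {0<..<1}"
    then have "norm (f (x + t *\<^sub>R h) - f x) \<le> L * (t * norm h)"
      using lipschitz_on_normD[OF lip, of "x + t *\<^sub>R h" x] by simp
    then show "norm ((f (x + t *\<^sub>R h) - f x) /\<^sub>R t) \<le> L * norm h"
      using \<open>t \<in> {0<..<1}\<close> by (simp add: inverse_eq_divide pos_divide_le_eq mult_ac)
  qed simp
  ultimately show ?thesis
    by (rule Lim_norm_ubound[rotated]) simp
qed

lemma abs_matrix_entry_le_of_norm_bound:
  fixes B :: "real^'n^'m"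
  assumes "\<And>x. norm (B *v x) \<le> M * norm x"
  shows "\<bar>B $ i $ j\<bar> \<le> M"
proof -
  have "\<bar>B $ i $ j\<bar> = \<bar>(B *v axis j 1) $ i\<bar>"
    by (simp add: matrix_vector_mult_basis column_def)
  also have "\<dots> \<le> norm (B *v axis j 1)" by (rule component_le_norm_cart)
  also have "\<dots> \<le> M" using assms[of "axis j 1"] by simp
  finally show ?thesis .
qed

lemma abs_det_le_fact_mult_pow_of_norm_bound:
  fixes B :: "real^'n^'n"
  assumes "\<And>x. norm (B *v x) \<le> M * norm x"
  shows "\<bar>det B\<bar> \<le> fact CARD('n) * M ^ CARD('n)"
proof -
  have entry: "\<bar>B $ i $ j\<bar> \<le> M" for i j
    using assms by (rule abs_matrix_entry_le_of_norm_bound)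
  have "\<bar>det B\<bar> \<le> (\<Sum>p\<in>{p. p permutes UNIV}. \<bar>of_int (sign p) * (\<Prod>i\<in>UNIV. B $ i $ p i)\<bar>)"
    unfolding det_def by (rule sum_abs)
  also have "\<dots> \<le> (\<Sum>p\<in>{p. p permutes (UNIV::'n set)}. M ^ CARD('n))"
  proof (rule sum_mono)
    fix p :: "'n \<Rightarrow> 'n"
    have "\<bar>of_int (sign p) * (\<Prod>i\<in>UNIV. B $ i $ p i)\<bar> = (\<Prod>i\<in>UNIV. \<bar>B $ i $ p i\<bar>)"
      by (simp add: abs_mult abs_prod sign_def)
    also have "\<dots> \<le> (\<Prod>i\<in>(UNIV::'n set). M)"
      by (rule prod_mono) (simp add: entry)
    finally show "\<bar>of_int (sign p) * (\<Prod>i\<in>UNIV. B $ i $ p i)\<bar> \<le> M ^ CARD('n)" by simp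
  qed
  also have "\<dots> = fact CARD('n) * M ^ CARD('n)"
    by (simp add: card_permutations)
  finally show ?thesis .
qed

lemma le_of_pow_le_const_mult_pow:
  fixes x y C :: real
  assumes "0 \<le> y" and pow_le: "\<And>k. x ^ k \<le> C * y ^ k"
  shows "x \<le> y"
proof (rule ccontr)
  assume "\<not> x \<le> y"
  show False
  proof (cases "y = 0")
    case True
    then show False using pow_le[of 1] \<open>\<not> x \<le> y\<close> by simp
  next
    case False
    with \<open>0 \<le> y\<close> \<open>\<not> x \<le> y\<close> have "0 < y" "1 < x / y" by auto
    then obtain k where "C < (x / y) ^ k" using real_arch_pow by blast
    also have "(x / y) ^ k \<le> C"
      using pow_le[of k] \<open>0 < y\<close> by (simp add: power_divide divide_le_eq)
    finally show False by simp
  qed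
qed

text \<open>Instead of Hadamard's inequality, the crude bound \<open>|det B| \<le> n! M^n\<close> is applied
  to the powers \<open>A^k\<close>; the factor \<open>n!\<close> disappears as \<open>k \<rightarrow> \<infinity>\<close>.\<close>
lemma abs_det_le_pow_of_norm_bound:
  fixes A :: "real^'n^'n"
  assumes "0 \<le> c" and bound: "\<And>x. norm (A *v x) \<le> c * norm x"
  shows "\<bar>det A\<bar> \<le> c ^ CARD('n)"
proof (rule le_of_pow_le_const_mult_pow)
  fix k
  define P where "P = (((**) A) ^^ k) (mat 1)"
  have "norm (P *v x) \<le> c ^ k * norm x" for x
    unfolding P_def
  proof (induction k arbitrary: x)
    case (Suc k)
    have "norm (A *v ((((**) A) ^^ k) (mat 1) *v x)) \<le> c * (c ^ k * norm x)"
      using bound Suc.IH \<open>0 \<le> c\<close> by (meson mult_left_mono order_trans)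
    then show ?case by (simp add: matrix_vector_mul_assoc)
  qed simp
  then have "\<bar>det P\<bar> \<le> fact CARD('n) * (c ^ k) ^ CARD('n)"
    by (rule abs_det_le_fact_mult_pow_of_norm_bound)
  moreover have "det P = det A ^ k"
    unfolding P_def by (induction k) (simp_all add: det_mul)
  ultimately show "\<bar>det A\<bar> ^ k \<le> fact CARD('n) * (c ^ CARD('n)) ^ k"
    by (simp add: power_abs flip: power_mult) (simp add: mult.commute)
qed (use \<open>0 \<le> c\<close> in simp)

lemma abs_det_jacobian_le_of_lipschitz:
  fixes f :: "real^'n \<Rightarrow> real^'n"
  assumes "f differentiable (at x)" and "L-lipschitz_on UNIV f"
  shows "\<bar>det (jacobian f (at x))\<bar> \<le> L ^ CARD('n)"
proof -
  have f': "(f has_derivative frechet_derivative f (at x)) (at x)"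
    using assms(1) by (rule frechet_derivative_works[THEN iffD1])
  then have "linear (frechet_derivative f (at x))" by (rule has_derivative_linear)
  show ?thesis
    unfolding jacobian_def
  proof (rule abs_det_le_pow_of_norm_bound)
    show "0 \<le> L" using assms(2) by (rule lipschitz_on_nonneg)
    show "norm (matrix (frechet_derivative f (at x)) *v v) \<le> L * norm v" for v
      using norm_derivative_le_of_lipschitz[OF f' assms(2)]
      by (simp add: matrix_works \<open>linear (frechet_derivative f (at x))\<close>)
  qed
qed

lemma det_jacobian_mult_det_jacobian_right_inverse:
  fixes f g :: "real^'n \<Rightarrow> real^'n"
  assumes "f differentiable (at (g y))" and "g differentiable (at y)"
    and right_inverse: "\<And>y. f (g y) = y"
  shows "det (jacobian f (at (g y))) * det (jacobian g (at y)) = 1"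
proof -
  let ?f' = "frechet_derivative f (at (g y))" and ?g' = "frechet_derivative g (at y)"
  have f': "(f has_derivative ?f') (at (g y))" and g': "(g has_derivative ?g') (at y)"
    using assms(1,2) by (simp_all add: frechet_derivative_works)
  have "((\<lambda>y. f (g y)) has_derivative (\<lambda>h. ?f' (?g' h))) (at y)"
    using has_derivative_compose[OF g' f'] .
  moreover have "((\<lambda>y. f (g y)) has_derivative id) (at y)"
    unfolding right_inverse id_def by (rule has_derivative_ident)
  ultimately have "?f' \<circ> ?g' = id"
    unfolding comp_def by (rule has_derivative_unique)
  moreover have "matrix (?f' \<circ> ?g') = matrix ?f' ** matrix ?g'"
    using f' g' by (intro matrix_compose has_derivative_linear)
  ultimately have "det (matrix ?f' ** matrix ?g') = 1"
    by (metis matrix_id)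
  then show ?thesis
    unfolding jacobian_def det_mul .
qed

lemma lipschitz_on_UNIV_pos_of_inj:
  fixes f :: "'a::euclidean_space \<Rightarrow> 'b::metric_space"
  assumes "inj f" and "L-lipschitz_on UNIV f"
  shows "0 < L"
proof -
  obtain b :: 'a where "b \<in> Basis" using nonempty_Basis by blast
  then have "b \<noteq> 0" by auto
  then have "0 < dist (f b) (f 0)" using \<open>inj f\<close> by (simp add: inj_eq)
  also have "\<dots> \<le> L * norm b"
    using lipschitz_onD[OF assms(2), of b 0] by (simp add: dist_norm)
  finally show ?thesis
    using \<open>b \<noteq> 0\<close> by (simp add: zero_less_mult_iff)
qed

lemma C1_map_differentiable: "C1_map f \<Longrightarrow> f differentiable (at x)"
  unfolding C1_map_def differentiable_def by blast

lemma abs_det_jacobian_inv_bounds: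
  fixes T :: "real^'n \<Rightarrow> real^'n"
  assumes "diffeomorphism T" and "K-lipschitz_on UNIV T" and "L-lipschitz_on UNIV (inv T)"
  shows "1 / K ^ CARD('n) \<le> \<bar>det (jacobian (inv T) (at p))\<bar>"
    and "\<bar>det (jacobian (inv T) (at p))\<bar> \<le> L ^ CARD('n)"
proof -
  have "bij T" and "\<And>x. T differentiable (at x)" and "\<And>x. inv T differentiable (at x)"
    using assms(1) by (auto simp: diffeomorphism_def C1_map_differentiable)
  then have "det (jacobian T (at (inv T p))) * det (jacobian (inv T) (at p)) = 1"
    by (intro det_jacobian_mult_det_jacobian_right_inverse) (simp_all add: bij_is_surj surj_f_inv_f)
  then have product: "\<bar>det (jacobian T (at (inv T p)))\<bar> * \<bar>det (jacobian (inv T) (at p))\<bar> = 1"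
    by (simp flip: abs_mult)
  then have "0 < \<bar>det (jacobian T (at (inv T p)))\<bar>"
    by (cases "det (jacobian T (at (inv T p))) = 0") auto
  moreover have "\<bar>det (jacobian T (at (inv T p)))\<bar> \<le> K ^ CARD('n)"
    using \<open>\<And>x. T differentiable (at x)\<close> assms(2) by (rule abs_det_jacobian_le_of_lipschitz)
  moreover have "1 \<le> K ^ CARD('n) * \<bar>det (jacobian (inv T) (at p))\<bar>"
    using product \<open>\<bar>det (jacobian T (at (inv T p)))\<bar> \<le> K ^ CARD('n)\<close>
    by (metis abs_ge_zero mult_right_mono)
  ultimately show "1 / K ^ CARD('n) \<le> \<bar>det (jacobian (inv T) (at p))\<bar>"
    by (simp add: pos_divide_le_eq mult.commute)
  show "\<bar>det (jacobian (inv T) (at p))\<bar> \<le> L ^ CARD('n)"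
    using \<open>\<And>x. inv T differentiable (at x)\<close> assms(3) by (rule abs_det_jacobian_le_of_lipschitz)
qed

lemma pushforward_std_normal_density_ge:
  fixes T :: "real^'n \<Rightarrow> real^'n"
  assumes "diffeomorphism T" and "K-lipschitz_on UNIV T" and "L-lipschitz_on UNIV (inv T)"
  shows "1 / (L ^ CARD('n) * K ^ CARD('n)) * normal_density (T 0) ((1 / L\<^sup>2) *\<^sub>R mat 1) p
    \<le> pushforward_std_normal_density T p"
proof -
  let ?A = "(2 * pi) powr (- real CARD('n) / 2)"
  have "bij T" using assms(1) by (simp add: diffeomorphism_def)
  have "0 \<le> K" using assms(2) by (rule lipschitz_on_nonneg)
  have "0 < L"
    using bij_is_inj[OF bij_imp_bij_inv[OF \<open>bij T\<close>]] assms(3) by (rule lipschitz_on_UNIV_pos_of_inj)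
  have "norm (inv T p) \<le> L * norm (p - T 0)"
    using lipschitz_on_normD[OF assms(3), of p "T 0"] \<open>bij T\<close> by (simp add: bij_is_inj)
  then have gauss: "exp (- (L * norm (p - T 0))\<^sup>2 / 2) \<le> exp (- (norm (inv T p))\<^sup>2 / 2)"
    by (simp add: power_mono)
  have "1 / (L ^ CARD('n) * K ^ CARD('n)) * normal_density (T 0) ((1 / L\<^sup>2) *\<^sub>R mat 1) p
      = ?A * exp (- (L * norm (p - T 0))\<^sup>2 / 2) * (1 / K ^ CARD('n))"
    using normal_density_isotropic[of "1 / L" "T 0" p] \<open>0 < L\<close>
    by (simp add: power_divide field_simps)
  also have "\<dots> \<le> ?A * exp (- (norm (inv T p))\<^sup>2 / 2) * \<bar>det (jacobian (inv T) (at p))\<bar>"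
    using gauss abs_det_jacobian_inv_bounds(1)[OF assms] \<open>0 \<le> K\<close> by (intro mult_mono) simp_all
  also have "\<dots> = pushforward_std_normal_density T p"
    by (simp add: pushforward_std_normal_density_eq)
  finally show ?thesis .
qed

lemma pushforward_std_normal_density_le:
  fixes T :: "real^'n \<Rightarrow> real^'n"
  assumes "diffeomorphism T" and "K-lipschitz_on UNIV T" and "L-lipschitz_on UNIV (inv T)"
  shows "pushforward_std_normal_density T p
    \<le> L ^ CARD('n) * K ^ CARD('n) * normal_density (T 0) (K\<^sup>2 *\<^sub>R mat 1) p"
proof -
  let ?A = "(2 * pi) powr (- real CARD('n) / 2)"
  have "bij T" using assms(1) by (simp add: diffeomorphism_def)
  have "0 < K" using bij_is_inj[OF \<open>bij T\<close>] assms(2) by (rule lipschitz_on_UNIV_pos_of_inj)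
  have "norm (p - T 0) \<le> K * norm (inv T p)"
    using lipschitz_on_normD[OF assms(2), of "inv T p" 0] \<open>bij T\<close> by (simp add: bij_is_surj surj_f_inv_f)
  then have "norm (p - T 0) / K \<le> norm (inv T p)"
    using \<open>0 < K\<close> by (simp add: divide_le_eq mult.commute)
  then have gauss: "exp (- (norm (inv T p))\<^sup>2 / 2) \<le> exp (- (norm (p - T 0) / K)\<^sup>2 / 2)"
    using \<open>0 < K\<close> by (simp add: power_mono)
  have "pushforward_std_normal_density T p
      = ?A * exp (- (norm (inv T p))\<^sup>2 / 2) * \<bar>det (jacobian (inv T) (at p))\<bar>"
    by (simp add: pushforward_std_normal_density_eq)
  also have "\<dots> \<le> ?A * exp (- (norm (p - T 0) / K)\<^sup>2 / 2) * L ^ CARD('n)"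
    using gauss abs_det_jacobian_inv_bounds(2)[OF assms] by (intro mult_mono) simp_all
  also have "\<dots> = L ^ CARD('n) * K ^ CARD('n) * normal_density (T 0) (K\<^sup>2 *\<^sub>R mat 1) p"
    using normal_density_isotropic[of K "T 0" p] \<open>0 < K\<close> by (simp add: field_simps)
  finally show ?thesis .
qed

theorem lemma2:
  fixes T :: "real^'n \<Rightarrow> real^'n" and K L :: real and p :: "real^'n"
  assumes "diffeomorphism T"
    and "K-lipschitz_on UNIV T"
    and "L-lipschitz_on UNIV (inv T)"
  shows "1 / (L ^ CARD('n) * K ^ CARD('n)) * normal_density (T 0) ((1 / L\<^sup>2) *\<^sub>R mat 1) p
           \<le> pushforward_std_normal_density T p
         \<and> pushforward_std_normal_density T p
           \<le> L ^ CARD('n) * K ^ CARD('n) * normal_density (T 0) (K\<^sup>2 *\<^sub>R mat 1) p"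
  using pushforward_std_normal_density_ge[OF assms] pushforward_std_normal_density_le[OF assms]
  by blast

end
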